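(* Let $(A_0,A_1,A_2)$ be an extendable collection of cap sets in $\mathbb{F}_3^n$ with $|A_1|=|A_2|$, and let $S\subseteq\{0,1,2\}^m$ be an admissible set consisting of $\binom{m}{w}$ vectors, each of weight $w$. Then \[|S(A_0,A_1,A_2)| = \binom{m}{w}|A_0|^{m-w}|A_1|^{w}.\]
   Context: A cap set is a set $A \subseteq \mathbb{F}_3^n$ such that the only solutions of $x+y+z=0$ with $x,y,z\in A$ are those with $x=y=z$. Cap sets $A_0,A_1,A_2\subseteq\mathbb{F}_3^n$ form an extendable collection if (1) whenever $x,y\in A_0$ (not necessarily distinct) and $z\in A_1\cup A_2$, $x+y+z\neq 0$; and (2) whenever $x\in A_0$, $y\in A_1$, $z\in A_2$, $x+y+z\neq 0$. A set $S\subseteq\{0,1,2\}^m$ is admissible if (1) for all distinct $s,s'\in S$ there are coordinates $i,j$ with $s_i=0\neq s'_i$ and $s_j\neq 0=s'_j$; and (2) for all distinct $s,s',s''\in S$ there is a coordinate $k$ such that the multiset $\{s_k,s'_k,s''_k\}$ equals $\{0,1,2\}$, $\{0,0,1\}$ or $\{0,0,2\}$. The weight of a vector is its number of nonzero coordinates. For $s\in\{0,1,2\}^m$, $s(A_0,A_1,A_2)=A_{s_1}\times\cdots\times A_{s_m}\subseteq\mathbb{F}_3^{nm}$ and $S(A_0,A_1,A_2)=\bigcup_{s\in S}s(A_0,A_1,A_2)$. *)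

theory Defs
  imports "HOL-Analysis.Analysis" "HOL-Library.Multiset"
begin

text \<open>Vectors of F_3^n are modelled as elements of type 3 ^ 'n (the type 3 is Z/3Z).\<close>

definition cap_set :: "('a::ab_group_add) set \<Rightarrow> bool" where
  "cap_set A \<longleftrightarrow> (\<forall>x\<in>A. \<forall>y\<in>A. \<forall>z\<in>A. x + y + z = 0 \<longrightarrow> x = y \<and> y = z)"

definition extendable :: "('a::ab_group_add) set \<Rightarrow> 'a set \<Rightarrow> 'a set \<Rightarrow> bool" where
  "extendable A0 A1 A2 \<longleftrightarrow> cap_set A0 \<and> cap_set A1 \<and> cap_set A2 \<and>
     (\<forall>x\<in>A0. \<forall>y\<in>A0. \<forall>z\<in>A1 \<union> A2. x + y + z \<noteq> 0) \<and>
     (\<forall>x\<in>A0. \<forall>y\<in>A1. \<forall>z\<in>A2. x + y + z \<noteq> 0)"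

definition ternary_vecs :: "nat \<Rightarrow> (nat \<Rightarrow> nat) set" where
  "ternary_vecs m = PiE {..<m} (\<lambda>_. {0,1,2})"

definition admissible :: "nat \<Rightarrow> (nat \<Rightarrow> nat) set \<Rightarrow> bool" where
  "admissible m S \<longleftrightarrow> S \<subseteq> ternary_vecs m \<and>
     (\<forall>s\<in>S. \<forall>s'\<in>S. s \<noteq> s' \<longrightarrow>
        (\<exists>i<m. \<exists>j<m. s i = 0 \<and> s' i \<noteq> 0 \<and> s j \<noteq> 0 \<and> s' j = 0)) \<and>
     (\<forall>s\<in>S. \<forall>s'\<in>S. \<forall>s''\<in>S. s \<noteq> s' \<and> s \<noteq> s'' \<and> s' \<noteq> s'' \<longrightarrow>
        (\<exists>k<m. {#s k, s' k, s'' k#} \<in> {{#0,1,2#}, {#0,0,1#}, {#0,0,2#}}))"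

definition weight :: "nat \<Rightarrow> (nat \<Rightarrow> nat) \<Rightarrow> nat" where
  "weight m s = card {i. i < m \<and> s i \<noteq> 0}"

definition sel :: "'a set \<Rightarrow> 'a set \<Rightarrow> 'a set \<Rightarrow> nat \<Rightarrow> 'a set" where
  "sel A0 A1 A2 k = (if k = 0 then A0 else if k = 1 then A1 else A2)"

text \<open>s(A0,A1,A2) = A_{s_1} x ... x A_{s_m}, as m-tuples of vectors (identified with F_3^{nm}).\<close>
definition vec_prod :: "nat \<Rightarrow> (nat \<Rightarrow> nat) \<Rightarrow> 'a set \<Rightarrow> 'a set \<Rightarrow> 'a set \<Rightarrow> (nat \<Rightarrow> 'a) set" where
  "vec_prod m s A0 A1 A2 = PiE {..<m} (\<lambda>i. sel A0 A1 A2 (s i))"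

definition set_prod :: "nat \<Rightarrow> (nat \<Rightarrow> nat) set \<Rightarrow> 'a set \<Rightarrow> 'a set \<Rightarrow> 'a set \<Rightarrow> (nat \<Rightarrow> 'a) set" where
  "set_prod m S A0 A1 A2 = (\<Union>s\<in>S. vec_prod m s A0 A1 A2)"

end

theory Submission
  imports Defs
begin

text \<open>Since \<open>x + x + x = 0\<close> in characteristic 3, the first extendability condition
  with \<open>x = y = z\<close> forces \<open>A\<^sub>0\<close> to be disjoint from \<open>A\<^sub>1 \<union> A\<^sub>2\<close>. For distinct \<open>s, s' \<in> S\<close>,
  admissibility gives a coordinate where \<open>s\<close> is 0 and \<open>s'\<close> is not, so the boxes
  \<open>s(A\<^sub>0,A\<^sub>1,A\<^sub>2)\<close> and \<open>s'(A\<^sub>0,A\<^sub>1,A\<^sub>2)\<close> are disjoint there. Hence the union is disjoint, and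
  as \<open>|A\<^sub>1| = |A\<^sub>2|\<close> each box of weight \<open>w\<close> has \<open>|A\<^sub>0|\<^sup>m\<^sup>-\<^sup>w |A\<^sub>1|\<^sup>w\<close> elements.
  Neither the cap-set property nor the second admissibility condition enters the count.\<close>

lemma vec3_triple_eq_0: fixes z :: "3 ^ 'n" shows "z + z + z = 0"
proof -
  have "a + a + a = 0" for a :: 3
  proof -
    have "a + a + a = of_nat 3 * a" by (simp add: algebra_simps)
    also have "(of_nat 3 :: 3) = 0" by simp
    finally show ?thesis by simp
  qed
  then show ?thesis by (simp add: vec_eq_iff)
qed

lemma extendable_disjoint:
  fixes A0 A1 A2 :: "'a::ab_group_add set"
  assumes "extendable A0 A1 A2" and "\<And>x. x \<in> A0 \<Longrightarrow> x + x + x = 0"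
  shows "A0 \<inter> (A1 \<union> A2) = {}"
  using assms unfolding extendable_def by blast

lemma finite_ternary_vecs: "finite (ternary_vecs m)"
  unfolding ternary_vecs_def by (auto intro: finite_PiE)

lemma card_zero_coords: "card {i. i < m \<and> s i = 0} = m - weight m s"
proof -
  have "{i. i < m \<and> s i = 0} = {..<m} - {i. i < m \<and> s i \<noteq> 0}" by auto
  moreover have "{i. i < m \<and> s i \<noteq> 0} \<subseteq> {..<m}" by auto
  ultimately show ?thesis
    by (simp add: weight_def card_Diff_subset finite_subset)
qed

lemma card_vec_prod:
  assumes "card A1 = card A2"
  shows "card (vec_prod m s A0 A1 A2) = card A0 ^ (m - weight m s) * card A1 ^ weight m s"
proof -
  have "card (vec_prod m s A0 A1 A2) = (\<Prod>i<m. if s i = 0 then card A0 else card A1)"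
    unfolding vec_prod_def card_PiE[OF finite_lessThan]
    by (rule prod.cong) (simp_all add: sel_def assms)
  also have "\<dots> = (\<Prod>i\<in>{..<m} \<inter> {i. s i = 0}. card A0) *
                   (\<Prod>i\<in>{..<m} \<inter> - {i. s i = 0}. card A1)"
    by (rule prod.If_cases) simp
  also have "{..<m} \<inter> {i. s i = 0} = {i. i < m \<and> s i = 0}" by auto
  also have "{..<m} \<inter> - {i. s i = 0} = {i. i < m \<and> s i \<noteq> 0}" by auto
  finally show ?thesis
    by (simp add: card_zero_coords weight_def)
qed

lemma vec_prod_disjoint:
  assumes "i < m" and "sel A0 A1 A2 (s i) \<inter> sel A0 A1 A2 (s' i) = {}"
  shows "vec_prod m s A0 A1 A2 \<inter> vec_prod m s' A0 A1 A2 = {}"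
proof -
  have "x i \<in> sel A0 A1 A2 (s i) \<inter> sel A0 A1 A2 (s' i)"
    if "x \<in> vec_prod m s A0 A1 A2 \<inter> vec_prod m s' A0 A1 A2" for x
    using that \<open>i < m\<close> unfolding vec_prod_def by auto
  with assms(2) show ?thesis by blast
qed

lemma admissible_disjoint_family:
  assumes "A0 \<inter> (A1 \<union> A2) = {}" and "admissible m S"
  shows "disjoint_family_on (\<lambda>s. vec_prod m s A0 A1 A2) S"
  unfolding disjoint_family_on_def
proof (intro ballI impI)
  fix s s' assume "s \<in> S" "s' \<in> S" "s \<noteq> s'"
  then obtain i where i: "i < m" "s i = 0" "s' i \<noteq> 0"
    using assms(2) unfolding admissible_def by blast
  with assms(1) have "sel A0 A1 A2 (s i) \<inter> sel A0 A1 A2 (s' i) = {}"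
    by (auto simp: sel_def)
  with i(1) show "vec_prod m s A0 A1 A2 \<inter> vec_prod m s' A0 A1 A2 = {}"
    by (rule vec_prod_disjoint)
qed

lemma card_set_prod:
  fixes A0 A1 A2 :: "'a::finite set"
  assumes "A0 \<inter> (A1 \<union> A2) = {}" and "card A1 = card A2" and "admissible m S"
    and "\<forall>s\<in>S. weight m s = w"
  shows "card (set_prod m S A0 A1 A2) = card S * card A0 ^ (m - w) * card A1 ^ w"
proof -
  have "S \<subseteq> ternary_vecs m"
    using assms(3) by (simp add: admissible_def)
  then have "finite S"
    using finite_ternary_vecs by (rule finite_subset)
  then have "card (set_prod m S A0 A1 A2) = (\<Sum>s\<in>S. card (vec_prod m s A0 A1 A2))"
    unfolding set_prod_def
    by (intro card_UN_disjoint' admissible_disjoint_family assms(1,3))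
      (simp_all add: vec_prod_def finite_PiE)
  also have "\<dots> = (\<Sum>s\<in>S. card A0 ^ (m - w) * card A1 ^ w)"
    using assms(4) by (simp add: card_vec_prod[OF assms(2)])
  finally show ?thesis by simp
qed

theorem lemma2p11:
  fixes A0 A1 A2 :: "(3 ^ 'n) set" and S :: "(nat \<Rightarrow> nat) set" and m w :: nat
  assumes "extendable A0 A1 A2"
    and "card A1 = card A2"
    and "admissible m S"
    and "card S = m choose w"
    and "\<forall>s\<in>S. weight m s = w"
  shows "card (set_prod m S A0 A1 A2) = (m choose w) * card A0 ^ (m - w) * card A1 ^ w"
proof -
  have "A0 \<inter> (A1 \<union> A2) = {}"
    using assms(1) vec3_triple_eq_0 by (rule extendable_disjoint)
  from card_set_prod[OF this assms(2,3,5)] assms(4) show ?thesis by simp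
qed

end
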